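(* Let $m$ be even, let $C=\{c_1,\dots,c_m\}$ with axis $c_1\lhd\dots\lhd c_m$, and let $v$ be a random vote sampled from the Conitzer distribution $\mathcal{D}_{\mathrm{SP}}^{\mathrm{Con}}$ for this axis. For $j\in[m/2]$ and $i\in[m]$: \[\mathbb{P}[\mathrm{pos}_v(c_j)=i]=\begin{cases}2/(2m) & \text{if } i<j,\\ (j+1)/(2m) & \text{if } i=j,\\ 1/(2m) & \text{if } j<i<m-j+1,\\ (m-j+1)/(2m) & \text{if } i=m-j+1,\\ 0 & \text{if } i>m-j+1.\end{cases}\] Further, for each $j\in[m]$ and each $i\in[m]$, $\mathbb{P}[\mathrm{pos}_v(c_j)=i]=\mathbb{P}[\mathrm{pos}_v(c_{m-j+1})=i]$.
   Context: A vote over $C$ is a total order on $C$; $\mathrm{pos}_v(c)$ is the position of $c$ in $v$ (top position is 1). The Conitzer (random peak) distribution for the axis $c_1\lhd\dots\lhd c_m$ generates a vote as follows: pick a candidate uniformly at random and rank it first; then in each of $m-1$ iterations, the already selected candidates form an interval $\{c_a,\dots,c_b\}$ of the axis, and one chooses uniformly at random among the candidates $c_{a-1}$ and $c_{b+1}$ that exist (if only one exists it is chosen with probability 1) and places it in the highest still-available position. *)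

theory Defs
  imports "HOL-Probability.Probability"
begin

text \<open>Candidates c_1,...,c_m are represented by the naturals 1..m, with axis order 1 < 2 < ... < m.
A vote is a list of all candidates, top position first.\<close>

text \<open>con_ext m a b k: distribution of the remaining (at most k) candidates appended after the
already selected interval {a..b} of the axis.\<close>
fun con_ext :: "nat \<Rightarrow> nat \<Rightarrow> nat \<Rightarrow> nat \<Rightarrow> nat list pmf" where
  "con_ext m a b 0 = return_pmf []"
| "con_ext m a b (Suc k) =
     (if a \<le> 1 \<and> m \<le> b then return_pmf []
      else if a \<le> 1 then map_pmf ((#) (b+1)) (con_ext m a (b+1) k)
      else if m \<le> b then map_pmf ((#) (a-1)) (con_ext m (a-1) b k)
      else bind_pmf (pmf_of_set {a-1, b+1})
             (\<lambda>c. map_pmf ((#) c) (if c = a-1 then con_ext m (a-1) b k else con_ext m a (b+1) k)))"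

definition conitzer :: "nat \<Rightarrow> nat list pmf" where
  "conitzer m = bind_pmf (pmf_of_set {1..m}) (\<lambda>c. map_pmf ((#) c) (con_ext m c c (m-1)))"

definition pos :: "nat list \<Rightarrow> nat \<Rightarrow> nat" where
  "pos v c = Suc (LEAST i. i < length v \<and> v ! i = c)"

end

theory Submission
  imports Defs
begin

(* The selected candidates always form an interval [a, b] of the axis, and a Conitzer vote is
   generated by a random walk of this interval that grows by one candidate per step.  The
   candidate in position k + 2 is the one added in step k + 1, so its law is determined by the
   law of the interval after k steps.  Starting from a uniform peak, the interval after n steps
   is [s, s + n] with probability 1 if it is the whole axis, (n + 2) / (2m) if it contains
   exactly one end of the axis and 1 / m otherwise, by induction on n.  Hence c_j is in
   position i >= 2 with probability 1 / (2m) or i / (2m) through being added as the left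
   neighbour of [j + 1, j + i - 1], plus the same through being added as the right neighbour
   of [j - i + 1, j - 1].  The resulting formula is symmetric under j |-> m + 1 - j, and for
   j <= m / 2 it is the stated table. *)

fun walk_pmf :: "('a \<Rightarrow> 'a pmf) \<Rightarrow> nat \<Rightarrow> 'a \<Rightarrow> 'a pmf" where
  "walk_pmf K 0 x = return_pmf x"
| "walk_pmf K (Suc n) x = bind_pmf (K x) (walk_pmf K n)"

lemma walk_pmf_Suc_last: "walk_pmf K (Suc n) x = bind_pmf (walk_pmf K n x) K"
proof (induction n arbitrary: x)
  case 0
  have "walk_pmf K 0 = return_pmf" by auto
  then show ?case by (simp add: bind_return_pmf bind_return_pmf')
next
  case (Suc n)
  have "walk_pmf K (Suc n) = (\<lambda>y. bind_pmf (walk_pmf K n y) K)"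
    using Suc.IH by blast
  then have "walk_pmf K (Suc (Suc n)) x = bind_pmf (bind_pmf (K x) (walk_pmf K n)) K"
    by (simp add: bind_assoc_pmf)
  then show ?case by (simp only: walk_pmf.simps(2)[of K n])
qed

lemma pmf_bind_two_sources:
  assumes "\<And>x. x \<in> set_pmf M \<Longrightarrow> pmf (K x) y \<noteq> 0 \<Longrightarrow> x = x1 \<or> x = x2" "x1 \<noteq> x2"
    and "x1 \<in> set_pmf M \<Longrightarrow> pmf (K x1) y = p1" "x2 \<in> set_pmf M \<Longrightarrow> pmf (K x2) y = p2"
  shows "pmf (bind_pmf M K) y = pmf M x1 * p1 + pmf M x2 * p2"
proof -
  have "pmf (bind_pmf M K) y = (\<Sum>x\<in>{x1, x2}. pmf (K x) y * pmf M x)"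
    unfolding pmf_bind by (rule integral_measure_pmf_real) (use assms(1) in auto)
  also have "\<dots> = pmf M x1 * p1 + pmf M x2 * p2"
    using assms(2-4) by (cases "x1 \<in> set_pmf M"; cases "x2 \<in> set_pmf M") (auto simp: set_pmf_iff)
  finally show ?thesis .
qed

lemma pos_nth:
  assumes "distinct v" "k < length v"
  shows "pos v (v ! k) = Suc k"
  unfolding pos_def
proof (rule arg_cong[where f = Suc], rule Least_equality)
  show "k < length v \<and> v ! k = v ! k" using assms by simp
qed (use assms nth_eq_iff_index_eq in fastforce)

lemma pos_eq_Suc_iff:
  assumes "distinct v" "j \<in> set v" "k < length v"
  shows "pos v j = Suc k \<longleftrightarrow> v ! k = j"
  using assms by (metis in_set_conv_nth nat.inject pos_nth)

(* On the whole axis (a <= 1 and m <= b) the value is junk; the lemmas below exclude this case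
   by the hypothesis 1 < a \<or> b < m. *)
definition next_candidate :: "nat \<Rightarrow> nat \<times> nat \<Rightarrow> nat pmf" where
  "next_candidate m = (\<lambda>(a, b). if a \<le> 1 then return_pmf (b + 1)
     else if m \<le> b then return_pmf (a - 1) else pmf_of_set {a - 1, b + 1})"

definition extend_interval :: "nat \<times> nat \<Rightarrow> nat \<Rightarrow> nat \<times> nat" where
  "extend_interval = (\<lambda>(a, b) c. (min a c, max b c))"

definition interval_step :: "nat \<Rightarrow> nat \<times> nat \<Rightarrow> (nat \<times> nat) pmf" where
  "interval_step m ab = map_pmf (extend_interval ab) (next_candidate m ab)"

lemma con_ext_Suc_next_candidate:
  assumes "a \<le> b" "1 < a \<or> b < m"
  shows "con_ext m a b (Suc k) =
    bind_pmf (next_candidate m (a, b)) (\<lambda>c. map_pmf ((#) c) (con_ext m (min a c) (max b c) k))"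
  using assms by (auto simp: next_candidate_def bind_return_pmf intro!: bind_pmf_cong)

lemma pmf_next_candidate:
  assumes "a \<le> b" "1 < a \<or> b < m"
  shows "pmf (next_candidate m (a, b)) c =
    (if c = a - 1 \<and> 1 < a then if b < m then 1/2 else 1
     else if c = b + 1 \<and> b < m then if 1 < a then 1/2 else 1 else 0)"
  using assms by (auto simp: next_candidate_def indicator_def)

lemma set_next_candidate:
  assumes "a \<le> b" "1 < a \<or> b < m"
  shows "c \<in> set_pmf (next_candidate m (a, b)) \<longleftrightarrow> (c = a - 1 \<and> 1 < a) \<or> (c = b + 1 \<and> b < m)"
  using pmf_next_candidate[OF assms, of c] by (auto simp: set_pmf_iff)

lemma pmf_interval_step:
  assumes "a \<le> b" "1 < a \<or> b < m"
  shows "pmf (interval_step m (a, b)) x =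
    (if x = (a - 1, b) \<and> 1 < a then if b < m then 1/2 else 1
     else if x = (a, b + 1) \<and> b < m then if 1 < a then 1/2 else 1 else 0)"
proof -
  have "map_pmf (extend_interval (a, b)) (pmf_of_set {a - 1, b + 1}) = pmf_of_set {(a - 1, b), (a, b + 1)}"
    if "1 < a" using that assms
    by (subst map_pmf_of_set_inj) (auto simp: inj_on_def extend_interval_def)
  then show ?thesis
    using assms by (auto simp: interval_step_def next_candidate_def extend_interval_def indicator_def)
qed

lemma con_ext_nth:
  assumes "k < l" "a \<le> b" "b + Suc k < m + a"
  shows "map_pmf (\<lambda>xs. xs ! k) (con_ext m a b l) =
    bind_pmf (walk_pmf (interval_step m) k (a, b)) (next_candidate m)"
  using assms
proof (induction k arbitrary: a b l)
  case 0
  then obtain l' where "l = Suc l'" by (cases l) auto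
  moreover have "1 < a \<or> b < m" using 0 by linarith
  ultimately show ?case
    using 0 by (simp add: con_ext_Suc_next_candidate map_bind_pmf map_pmf_comp bind_return_pmf bind_return_pmf'
                     del: con_ext.simps)
next
  case (Suc k)
  then obtain l' where l: "l = Suc l'" by (cases l) auto
  have not_full: "1 < a \<or> b < m" using Suc.prems by linarith
  have IH: "map_pmf (\<lambda>xs. xs ! k) (con_ext m (min a c) (max b c) l') =
      bind_pmf (walk_pmf (interval_step m) k (extend_interval (a, b) c)) (next_candidate m)"
    if "c \<in> set_pmf (next_candidate m (a, b))" for c
  proof -
    from that not_full Suc.prems have "k < l' \<and> min a c \<le> max b c \<and> max b c + Suc k < m + min a c"
      by (auto simp: l set_next_candidate)
    with Suc.IH show ?thesis by (simp add: extend_interval_def)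
  qed
  from not_full Suc.prems have "map_pmf (\<lambda>xs. xs ! Suc k) (con_ext m a b l) =
      bind_pmf (next_candidate m (a, b))
        (\<lambda>c. map_pmf (\<lambda>xs. xs ! k) (con_ext m (min a c) (max b c) l'))"
    by (simp add: l con_ext_Suc_next_candidate map_bind_pmf map_pmf_comp del: con_ext.simps)
  also have "\<dots> = bind_pmf (interval_step m (a, b))
      (\<lambda>ab. bind_pmf (walk_pmf (interval_step m) k ab) (next_candidate m))"
    by (simp add: IH interval_step_def bind_map_pmf cong: bind_pmf_cong)
  finally show ?case by (simp add: bind_assoc_pmf)
qed

lemma set_pmf_con_ext:
  assumes "xs \<in> set_pmf (con_ext m a b k)" "1 \<le> a" "a \<le> b" "b \<le> m" "b + Suc k = m + a"
  shows "distinct xs \<and> set xs = {1..m} - {a..b}"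
  using assms
proof (induction k arbitrary: xs a b)
  case 0
  then show ?case by auto
next
  case (Suc k)
  have not_full: "1 < a \<or> b < m" using Suc.prems by linarith
  with Suc.prems(1,3) obtain c ys where xs: "xs = c # ys"
    and c: "c \<in> set_pmf (next_candidate m (a, b))" and ys: "ys \<in> set_pmf (con_ext m (min a c) (max b c) k)"
    by (auto simp: con_ext_Suc_next_candidate simp del: con_ext.simps)
  have c': "(c = a - 1 \<and> 1 < a) \<or> (c = b + 1 \<and> b < m)"
    using c set_next_candidate[OF Suc.prems(3) not_full] by blast
  then have "1 \<le> min a c" "min a c \<le> max b c" "max b c \<le> m" "max b c + Suc k = m + min a c"
    using Suc.prems(2-5) by auto
  note ys_set = Suc.IH[OF ys this]
  have "{1..m} - {a..b} = insert c ({1..m} - {min a c..max b c})"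
    using c' Suc.prems(2-4) by (elim disjE) auto
  with ys_set show ?case by (auto simp: xs)
qed

lemma set_pmf_conitzer:
  assumes "v \<in> set_pmf (conitzer m)" "0 < m"
  shows "distinct v \<and> set v = {1..m}"
proof -
  from assms obtain p xs where p: "p \<in> {1..m}" and v: "v = p # xs"
    and xs: "xs \<in> set_pmf (con_ext m p p (m - 1))"
    by (auto simp: conitzer_def)
  have "1 \<le> p" "p \<le> m" "p + Suc (m - 1) = m + p"
    using p assms(2) by auto
  from set_pmf_con_ext[OF xs this(1) order.refl this(2,3)] p show ?thesis
    by (simp add: v insert_absorb)
qed

definition conitzer_interval :: "nat \<Rightarrow> nat \<Rightarrow> (nat \<times> nat) pmf" where
  "conitzer_interval m n =
     bind_pmf (pmf_of_set {1..m}) (\<lambda>p. walk_pmf (interval_step m) n (p, p))"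

lemma conitzer_nth_0:
  assumes "0 < m"
  shows "map_pmf (\<lambda>v. v ! 0) (conitzer m) = pmf_of_set {1..m}"
  by (simp add: conitzer_def map_bind_pmf map_pmf_comp bind_return_pmf')

lemma conitzer_nth_Suc:
  assumes "Suc k < m"
  shows "map_pmf (\<lambda>v. v ! Suc k) (conitzer m) = bind_pmf (conitzer_interval m k) (next_candidate m)"
  using assms
  by (auto simp: conitzer_def conitzer_interval_def map_bind_pmf map_pmf_comp bind_assoc_pmf con_ext_nth
           intro!: bind_pmf_cong)

lemma prob_conitzer_pos_eq_pmf_nth:
  assumes "j \<in> {1..m}" "k < m"
  shows "measure_pmf.prob (conitzer m) {v. pos v j = Suc k} = pmf (map_pmf (\<lambda>v. v ! k) (conitzer m)) j"
proof -
  have "pos v j = Suc k \<longleftrightarrow> v ! k = j" if "v \<in> set_pmf (conitzer m)" for v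
    using set_pmf_conitzer[OF that] assms distinct_card[of v] by (intro pos_eq_Suc_iff) auto
  then have "measure_pmf.prob (conitzer m) {v. pos v j = Suc k} = measure_pmf.prob (conitzer m) {v. v ! k = j}"
    by (intro measure_pmf.finite_measure_eq_AE) (auto simp: AE_measure_pmf_iff)
  then show ?thesis by (simp add: pmf.rep_eq measure_map_pmf vimage_def)
qed

lemma pmf_bind_interval_step:
  assumes "\<And>a b. (a, b) \<in> set_pmf M \<Longrightarrow> b = a + n \<and> (1 < a \<or> b < m)"
  shows "pmf (bind_pmf M (interval_step m)) (s, e) =
    pmf M (s + 1, e) * (if 1 \<le> s then if e < m then 1/2 else 1 else 0)
    + pmf M (s, e - 1) * (if 1 \<le> e \<and> e \<le> m then if 1 < s then 1/2 else 1 else 0)"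
  by (rule pmf_bind_two_sources) (auto dest!: assms simp: pmf_interval_step split: if_splits)

lemma pmf_bind_next_candidate:
  assumes "\<And>a b. (a, b) \<in> set_pmf M \<Longrightarrow> b = a + n \<and> (1 < a \<or> b < m)" "1 \<le> c" "c \<le> m"
  shows "pmf (bind_pmf M (next_candidate m)) c =
    pmf M (c + 1, c + n + 1) * (if c + n + 1 < m then 1/2 else 1)
    + pmf M (c - n - 1, c - 1) * (if 1 < c - n - 1 then 1/2 else 1)"
  by (rule pmf_bind_two_sources) (use assms in \<open>auto dest!: assms(1) simp: pmf_next_candidate split: if_splits\<close>)

(* The value 1 / m for intervals away from the ends of the axis: summed over the peaks p, the
   walks reaching [s, s + n] have total probability sum_p C(n, p - s) / 2^n = 1. *)
definition interval_prob :: "nat \<Rightarrow> nat \<Rightarrow> nat \<Rightarrow> nat \<Rightarrow> real" where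
  "interval_prob m n s e =
     (if 1 \<le> s \<and> e = s + n \<and> e \<le> m then
        if s = 1 \<and> e = m then 1
        else if s = 1 \<or> e = m then real (n + 2) / (2 * real m)
        else 1 / real m
      else 0)"

lemma interval_prob_Suc:
  assumes "Suc n < m"
  shows "interval_prob m (Suc n) s e =
    interval_prob m n (s + 1) e * (if 1 \<le> s then if e < m then 1/2 else 1 else 0)
    + interval_prob m n s (e - 1) * (if 1 \<le> e \<and> e \<le> m then if 1 < s then 1/2 else 1 else 0)"
proof (cases "1 \<le> s \<and> e = s + Suc n \<and> e \<le> m")
  case True
  have "real m > 0" using assms by simp
  with True assms show ?thesis
    unfolding interval_prob_def
    by (cases "s = 1"; cases "e = m") (auto simp: field_simps add_nonneg_eq_0_iff)
next
  case False
  have left: "interval_prob m n (s + 1) e * (if 1 \<le> s then if e < m then 1/2 else 1 else 0) = 0"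
    using False by (cases "1 \<le> s") (auto simp add: interval_prob_def)
  have right: "interval_prob m n s (e - 1) * (if 1 \<le> e \<and> e \<le> m then if 1 < s then 1/2 else 1 else 0) = 0"
  proof (cases "1 \<le> s \<and> e - 1 = s + n \<and> e - 1 \<le> m")
    case True
    with False have "\<not> (1 \<le> e \<and> e \<le> m)" by linarith
    then show ?thesis by auto
  next
    case False
    then have "interval_prob m n s (e - 1) = 0" unfolding interval_prob_def by (rule if_not_P)
    then show ?thesis by simp
  qed
  have "interval_prob m (Suc n) s e = 0"
    using False unfolding interval_prob_def by (rule if_not_P)
  then show ?thesis unfolding left right by simp
qed

lemma pmf_conitzer_interval:
  assumes "n < m"
  shows "pmf (conitzer_interval m n) (s, e) = interval_prob m n s e"
  using assms
proof (induction n arbitrary: s e)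
  case 0
  have "conitzer_interval m 0 = pmf_of_set ((\<lambda>p. (p, p)) ` {1..m})"
    using 0 by (auto simp: conitzer_interval_def map_pmf_def[symmetric] map_pmf_of_set_inj inj_on_def)
  moreover have "card ((\<lambda>p. (p, p)) ` {1..m}) = m"
    by (subst card_image) (auto simp: inj_on_def)
  ultimately show ?case
    using 0 by (auto simp: interval_prob_def indicator_def)
next
  case (Suc n)
  have IH: "pmf (conitzer_interval m n) (s, e) = interval_prob m n s e" for s e
    using Suc by simp
  have support: "b = a + n \<and> (1 < a \<or> b < m)" if "(a, b) \<in> set_pmf (conitzer_interval m n)" for a b
    using that Suc.prems by (auto simp: set_pmf_iff IH interval_prob_def split: if_splits)
  have "conitzer_interval m (Suc n) = bind_pmf (conitzer_interval m n) (interval_step m)"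
    by (simp add: conitzer_interval_def walk_pmf_Suc_last bind_assoc_pmf del: walk_pmf.simps)
  then show ?case
    by (simp only: pmf_bind_interval_step[OF support] IH interval_prob_Suc[OF Suc.prems])
qed

lemma prob_conitzer_pos_1:
  assumes "j \<in> {1..m}"
  shows "measure_pmf.prob (conitzer m) {v. pos v j = 1} = 1 / real m"
proof -
  have "0 < m" using assms by simp
  with assms show ?thesis
    using prob_conitzer_pos_eq_pmf_nth[of j m 0] by (simp add: conitzer_nth_0)
qed

lemma prob_conitzer_pos:
  assumes "j \<in> {1..m}" "2 \<le> i" "i \<le> m"
  shows "measure_pmf.prob (conitzer m) {v. pos v j = i} =
    (if j + i \<le> m then 1 / (2 * real m) else if j + i = m + 1 then real i / (2 * real m) else 0)
    + (if i < j then 1 / (2 * real m) else if i = j then real i / (2 * real m) else 0)"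
proof -
  obtain k where i: "i = Suc (Suc k)" using assms(2) by (metis add_2_eq_Suc le_Suc_ex)
  have support: "b = a + k \<and> (1 < a \<or> b < m)" if "(a, b) \<in> set_pmf (conitzer_interval m k)" for a b
    using that assms(3) by (auto simp: i set_pmf_iff pmf_conitzer_interval interval_prob_def split: if_splits)
  have left: "interval_prob m k (j + 1) (j + k + 1) * (if j + k + 1 < m then 1/2 else 1) =
      (if j + i \<le> m then 1 / (2 * real m) else if j + i = m + 1 then real i / (2 * real m) else 0)"
    using assms(1) by (simp add: i interval_prob_def)
  have right: "interval_prob m k (j - k - 1) (j - 1) * (if 1 < j - k - 1 then 1/2 else 1) =
      (if i < j then 1 / (2 * real m) else if i = j then real i / (2 * real m) else 0)"
    using assms(1) by (cases "i \<le> j") (auto simp add: i interval_prob_def)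
  have k: "k < m" "Suc k < m" using assms(3) i by auto
  have "measure_pmf.prob (conitzer m) {v. pos v j = i} = pmf (map_pmf (\<lambda>v. v ! Suc k) (conitzer m)) j"
    unfolding i by (rule prob_conitzer_pos_eq_pmf_nth[OF assms(1) k(2)])
  also have "\<dots> = pmf (bind_pmf (conitzer_interval m k) (next_candidate m)) j"
    unfolding conitzer_nth_Suc[OF k(2)] ..
  also have "\<dots> = pmf (conitzer_interval m k) (j + 1, j + k + 1) * (if j + k + 1 < m then 1/2 else 1)
      + pmf (conitzer_interval m k) (j - k - 1, j - 1) * (if 1 < j - k - 1 then 1/2 else 1)"
    using assms(1) by (intro pmf_bind_next_candidate[OF support]) auto
  also have "\<dots> = (if j + i \<le> m then 1 / (2 * real m) else if j + i = m + 1 then real i / (2 * real m) else 0)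
    + (if i < j then 1 / (2 * real m) else if i = j then real i / (2 * real m) else 0)"
    unfolding pmf_conitzer_interval[OF k(1)] left right ..
  finally show ?thesis .
qed

lemma prob_conitzer_pos_left_half:
  assumes "j \<in> {1..m div 2}" "i \<in> {1..m}"
  shows "measure_pmf.prob (conitzer m) {v. pos v j = i} =
    (if i < j then 2 / (2 * real m)
     else if i = j then real (j + 1) / (2 * real m)
     else if i < m - j + 1 then 1 / (2 * real m)
     else if i = m - j + 1 then real (m - j + 1) / (2 * real m)
     else 0)"
proof -
  have j: "j \<in> {1..m}" "2 * j \<le> m" using assms(1) by auto
  show ?thesis
  proof (cases "i = 1")
    case True
    have "1 \<le> j" using j by simp
    with True prob_conitzer_pos_1[OF j(1)] show ?thesis by auto
  next
    case False
    with j assms(2) show ?thesis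
      by (auto simp: prob_conitzer_pos add_divide_distrib[symmetric])
  qed
qed

lemma prob_conitzer_pos_reflect:
  assumes "j \<in> {1..m}" "i \<in> {1..m}"
  shows "measure_pmf.prob (conitzer m) {v. pos v j = i} =
    measure_pmf.prob (conitzer m) {v. pos v (m - j + 1) = i}"
proof -
  have j': "m - j + 1 \<in> {1..m}" using assms(1) by auto
  show ?thesis
  proof (cases "i = 1")
    case True
    show ?thesis using prob_conitzer_pos_1[OF assms(1)] prob_conitzer_pos_1[OF j'] True by simp
  next
    case False
    then have i: "2 \<le> i" "i \<le> m" using assms(2) by auto
    have "(m - j + 1 + i \<le> m) = (i < j)" "(m - j + 1 + i = m + 1) = (i = j)"
      "(i < m - j + 1) = (j + i \<le> m)" "(i = m - j + 1) = (j + i = m + 1)"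
      using assms(1) by auto
    then show ?thesis
      unfolding prob_conitzer_pos[OF assms(1) i] prob_conitzer_pos[OF j' i] by (simp only: add.commute)
  qed
qed

theorem theorem4:
  fixes m :: nat
  assumes "even m"
  shows "(\<forall>j\<in>{1..m div 2}. \<forall>i\<in>{1..m}.
            measure_pmf.prob (conitzer m) {v. pos v j = i} =
              (if i < j then 2 / (2 * real m)
               else if i = j then real (j+1) / (2 * real m)
               else if i < m - j + 1 then 1 / (2 * real m)
               else if i = m - j + 1 then real (m - j + 1) / (2 * real m)
               else 0))
       \<and> (\<forall>j\<in>{1..m}. \<forall>i\<in>{1..m}.
            measure_pmf.prob (conitzer m) {v. pos v j = i} =
            measure_pmf.prob (conitzer m) {v. pos v (m - j + 1) = i})"
  using prob_conitzer_pos_left_half prob_conitzer_pos_reflect by blast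

end
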